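(* Under the setting in the context, write $A=A_1+A_2$, where $A_1$ is the block-diagonal part of $A$ with respect to the partition $\{1,\dots,n\}=\mathcal C_1\sqcup\mathcal C_2$ (so $(A_1)_{ij}=A_{ij}$ if $i,j$ lie in the same class and $0$ otherwise) and $A_2=A-A_1$ is the cross-class part. Write $$M^{-1}=\begin{pmatrix}\widetilde M_{11}&\widetilde M_{12}\\ \widetilde M_{21}&\widetilde M_{22}\end{pmatrix}$$ in block form with respect to this partition. Let $\epsilon>0$. If $\|A_2\|_1<\epsilon$, then $$\|\widetilde M_{12}\|_1<\Big(\frac{1}{c\,d_{\min}}\Big)^2\epsilon,$$ where $c=\min\{1/\lambda,\,w_0\}$, $d_{\min}=\min_i D_{ii}$, and $\|\cdot\|_1$ denotes the matrix norm induced by the vector $\ell^1$-norm (maximum absolute column sum).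
   Context: Let $n\ge1$ and let $\{1,\dots,n\}=\mathcal L\sqcup\mathcal U$ be a partition into labeled indices $\mathcal L$ and unlabeled indices $\mathcal U$. Let $A\in\mathbb R^{n\times n}$ be symmetric with nonnegative entries. Let $D$ be the diagonal matrix with $D_{ii}=\sum_jA_{ij}$, and assume $D_{ii}>0$ for all $i$. Fix $\lambda>0$ and $w_0>0$. Let $P$ be diagonal with $P_{ii}=\frac1\lambda D_{ii}$ for $i\in\mathcal L$ and $P_{ii}=w_0D_{ii}$ for $i\in\mathcal U$. Set $M=D+P-A$; it is invertible. The indices are also partitioned, independently of $\mathcal L,\mathcal U$, by their true class: $\{1,\dots,n\}=\mathcal C_1\sqcup\mathcal C_2$, where $\mathcal C_1$ is the set of positive points and $\mathcal C_2$ the set of negative points. Indices are ordered so that $\mathcal C_1$ comes first. *)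

theory Defs
  imports "HOL-Analysis.Analysis"
begin

definition degD :: "real^'n^'n \<Rightarrow> 'n \<Rightarrow> real" where
  "degD A i = (\<Sum>j\<in>UNIV. A $ i $ j)"

definition penP :: "real^'n^'n \<Rightarrow> 'n set \<Rightarrow> real \<Rightarrow> real \<Rightarrow> 'n \<Rightarrow> real" where
  "penP A L lam w0 i = (if i \<in> L then (1 / lam) * degD A i else w0 * degD A i)"

definition Mmat :: "real^'n^'n \<Rightarrow> 'n set \<Rightarrow> real \<Rightarrow> real \<Rightarrow> real^'n^'n" where
  "Mmat A L lam w0 = (\<chi> i j. (if i = j then degD A i + penP A L lam w0 i else 0) - A $ i $ j)"

definition cross_part :: "real^'n^'n \<Rightarrow> 'n set \<Rightarrow> real^'n^'n" where
  "cross_part A C1 = (\<chi> i j. if (i \<in> C1) = (j \<in> C1) then 0 else A $ i $ j)"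

text \<open>Induced l1 norm (maximum absolute column sum) of the submatrix of X with
  row index set R and column index set C (0 for an empty block).\<close>
definition block_norm1 :: "'n set \<Rightarrow> 'n set \<Rightarrow> real^'n^'n \<Rightarrow> real" where
  "block_norm1 R C X = Max (insert 0 ((\<lambda>j. \<Sum>i\<in>R. \<bar>X $ i $ j\<bar>) ` C))"

definition mat_norm1 :: "real^'n^'n \<Rightarrow> real" where
  "mat_norm1 X = block_norm1 UNIV UNIV X"

end

theory Submission
  imports Defs
begin

text \<open>Let \<open>\<kappa> = c d_min\<close> (\<open>l1_margin\<close>), a lower bound for every penalty \<open>P_ii\<close>. Row \<open>i\<close> of
  \<open>y = M x\<close> gives \<open>(D_ii + P_ii) |x_i| \<le> |y_i| + \<Sum>_k A_ik |x_k|\<close>. Summing over a set \<open>S\<close> of rows,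
  symmetry of \<open>A\<close> bounds its column sums over \<open>S\<close> by the degrees, so the degree terms inside \<open>S\<close>
  cancel: \<open>\<kappa> \<Sum>_{k\<in>S} |x_k| \<le> \<Sum>_{i\<in>S} |y_i| + \<Sum>_{k\<notin>S} |x_k| \<Sum>_{i\<in>S} A_ik\<close>.
  For \<open>S\<close> the whole index set this is \<open>\<kappa> \<parallel>x\<parallel>_1 \<le> \<parallel>M x\<parallel>_1\<close>, so \<open>M\<close> is invertible and every column
  of \<open>M\<^sup>-\<^sup>1\<close> has \<open>\<ell>\<^sup>1\<close>-norm at most \<open>1/\<kappa>\<close>. For \<open>S = C1\<close> and \<open>x\<close> a column of \<open>M\<^sup>-\<^sup>1\<close> indexed by
  \<open>C2\<close>, the residual \<open>y\<close> vanishes on \<open>S\<close> and the remaining column sums of \<open>A\<close> are column sums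
  of \<open>A_2\<close>, so the \<open>C1\<close>-part of that column has norm at most \<open>\<parallel>A_2\<parallel>_1 / \<kappa>\<^sup>2\<close>.\<close>

lemma matrix_inv_right:
  fixes A :: "'a::field^'n^'n"
  assumes "invertible A"
  shows "A ** matrix_inv A = mat 1"
  using assms unfolding invertible_def matrix_inv_def by (rule someI2_ex) auto

lemma matrix_inv_column:
  fixes A :: "real^'n^'n"
  assumes "invertible A"
  shows "A *v column j (matrix_inv A) = axis j 1"
  by (metis assms matrix_inv_right matrix_vector_mul_assoc matrix_vector_mul_lid
      matrix_vector_mult_basis)

lemma transpose_eq_self_nth:
  assumes "transpose A = A"
  shows "A $ i $ k = A $ k $ i"
  by (metis assms transpose_def vec_lambda_beta)

lemma degD_nonneg:
  assumes "\<forall>i j. A $ i $ j \<ge> 0"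
  shows "degD A i \<ge> 0"
  unfolding degD_def using assms by (simp add: sum_nonneg)

lemma sum_column_le_degD:
  assumes "transpose A = A" and "\<forall>i j. A $ i $ j \<ge> 0"
  shows "(\<Sum>i\<in>S. A $ i $ k) \<le> degD A k"
proof -
  have "(\<Sum>i\<in>S. A $ i $ k) \<le> (\<Sum>i\<in>UNIV. A $ i $ k)"
    using assms(2) by (intro sum_mono2) auto
  also have "\<dots> = degD A k"
    unfolding degD_def using transpose_eq_self_nth[OF assms(1)] by simp
  finally show ?thesis .
qed

lemma Mmat_mult_vec_nth:
  "(Mmat A L lam w0 *v x) $ i
     = (degD A i + penP A L lam w0 i) * x $ i - (\<Sum>k\<in>UNIV. A $ i $ k * x $ k)"
  by (simp add: Mmat_def matrix_vector_mult_def left_diff_distrib sum_subtractf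
        if_distrib[of "\<lambda>t. t * _"] cong: if_cong)

lemma Mmat_row_abs_le:
  assumes "\<forall>i j. A $ i $ j \<ge> 0" and "lam > 0" and "w0 > 0"
  shows "(degD A i + penP A L lam w0 i) * \<bar>x $ i\<bar>
           \<le> \<bar>(Mmat A L lam w0 *v x) $ i\<bar> + (\<Sum>k\<in>UNIV. A $ i $ k * \<bar>x $ k\<bar>)"
proof -
  have "degD A i + penP A L lam w0 i \<ge> 0"
    using degD_nonneg[OF assms(1), of i] assms(2,3) by (simp add: penP_def)
  then have "(degD A i + penP A L lam w0 i) * \<bar>x $ i\<bar>
               = \<bar>(Mmat A L lam w0 *v x) $ i + (\<Sum>k\<in>UNIV. A $ i $ k * x $ k)\<bar>"
    by (simp add: Mmat_mult_vec_nth abs_mult)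
  also have "\<dots> \<le> \<bar>(Mmat A L lam w0 *v x) $ i\<bar> + \<bar>\<Sum>k\<in>UNIV. A $ i $ k * x $ k\<bar>"
    by (rule abs_triangle_ineq)
  also have "\<dots> \<le> \<bar>(Mmat A L lam w0 *v x) $ i\<bar> + (\<Sum>k\<in>UNIV. \<bar>A $ i $ k * x $ k\<bar>)"
    by (simp add: sum_abs)
  also have "\<dots> = \<bar>(Mmat A L lam w0 *v x) $ i\<bar> + (\<Sum>k\<in>UNIV. A $ i $ k * \<bar>x $ k\<bar>)"
    using assms(1) by (simp add: abs_mult)
  finally show ?thesis .
qed

lemma Mmat_penalty_mass_le:
  assumes "transpose A = A" and "\<forall>i j. A $ i $ j \<ge> 0" and "lam > 0" and "w0 > 0"
  shows "(\<Sum>k\<in>S. penP A L lam w0 k * \<bar>x $ k\<bar>)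
           \<le> (\<Sum>i\<in>S. \<bar>(Mmat A L lam w0 *v x) $ i\<bar>)
             + (\<Sum>k\<in>-S. \<bar>x $ k\<bar> * (\<Sum>i\<in>S. A $ i $ k))"
proof -
  let ?p = "penP A L lam w0" and ?y = "Mmat A L lam w0 *v x"
  let ?out = "\<Sum>k\<in>-S. \<bar>x $ k\<bar> * (\<Sum>i\<in>S. A $ i $ k)"
  have "(\<Sum>k\<in>S. \<bar>x $ k\<bar> * degD A k) + (\<Sum>k\<in>S. ?p k * \<bar>x $ k\<bar>)
          = (\<Sum>i\<in>S. (degD A i + ?p i) * \<bar>x $ i\<bar>)"
    by (simp add: sum.distrib[symmetric] algebra_simps)
  also have "\<dots> \<le> (\<Sum>i\<in>S. \<bar>?y $ i\<bar> + (\<Sum>k\<in>UNIV. A $ i $ k * \<bar>x $ k\<bar>))"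
    by (intro sum_mono Mmat_row_abs_le) (use assms in auto)
  also have "\<dots> = (\<Sum>i\<in>S. \<bar>?y $ i\<bar>) + (\<Sum>k\<in>UNIV. \<bar>x $ k\<bar> * (\<Sum>i\<in>S. A $ i $ k))"
    by (simp add: sum.distrib sum_distrib_left mult.commute sum.swap[of _ S])
  also have "(\<Sum>k\<in>UNIV. \<bar>x $ k\<bar> * (\<Sum>i\<in>S. A $ i $ k))
               = (\<Sum>k\<in>S. \<bar>x $ k\<bar> * (\<Sum>i\<in>S. A $ i $ k)) + ?out"
    using sum.union_disjoint[of S "-S"] by (simp add: Compl_partition)
  also have "(\<Sum>k\<in>S. \<bar>x $ k\<bar> * (\<Sum>i\<in>S. A $ i $ k)) \<le> (\<Sum>k\<in>S. \<bar>x $ k\<bar> * degD A k)"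
    by (intro sum_mono mult_left_mono sum_column_le_degD) (use assms in auto)
  finally show ?thesis by simp
qed

definition l1_margin :: "real^'n^'n \<Rightarrow> real \<Rightarrow> real \<Rightarrow> real" where
  "l1_margin A lam w0 = min (1 / lam) w0 * Min (range (degD A))"

lemma l1_margin_pos:
  assumes "\<forall>i. degD A i > 0" and "lam > 0" and "w0 > 0"
  shows "l1_margin A lam w0 > 0"
  using assms unfolding l1_margin_def by (simp add: Min_gr_iff)

lemma l1_margin_le_penP:
  assumes "\<forall>i j. A $ i $ j \<ge> 0" and "lam > 0" and "w0 > 0"
  shows "l1_margin A lam w0 \<le> penP A L lam w0 i"
proof -
  have "l1_margin A lam w0 \<le> min (1 / lam) w0 * degD A i"
    unfolding l1_margin_def using assms(2,3) by (intro mult_left_mono Min_le) auto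
  also have "\<dots> \<le> penP A L lam w0 i"
    using mult_right_mono[OF min.cobounded1[of "1 / lam" w0] degD_nonneg[OF assms(1), of i]]
      mult_right_mono[OF min.cobounded2[of "1 / lam" w0] degD_nonneg[OF assms(1), of i]]
    unfolding penP_def by auto
  finally show ?thesis .
qed

lemma Mmat_l1_bound_on:
  assumes "transpose A = A" and "\<forall>i j. A $ i $ j \<ge> 0" and "lam > 0" and "w0 > 0"
  shows "l1_margin A lam w0 * (\<Sum>k\<in>S. \<bar>x $ k\<bar>)
           \<le> (\<Sum>i\<in>S. \<bar>(Mmat A L lam w0 *v x) $ i\<bar>)
             + (\<Sum>k\<in>-S. \<bar>x $ k\<bar> * (\<Sum>i\<in>S. A $ i $ k))"
proof -
  have "l1_margin A lam w0 * (\<Sum>k\<in>S. \<bar>x $ k\<bar>) \<le> (\<Sum>k\<in>S. penP A L lam w0 k * \<bar>x $ k\<bar>)"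
    unfolding sum_distrib_left
    by (intro sum_mono mult_right_mono l1_margin_le_penP) (use assms in auto)
  also have "\<dots> \<le> (\<Sum>i\<in>S. \<bar>(Mmat A L lam w0 *v x) $ i\<bar>)
                   + (\<Sum>k\<in>-S. \<bar>x $ k\<bar> * (\<Sum>i\<in>S. A $ i $ k))"
    by (rule Mmat_penalty_mass_le[OF assms])
  finally show ?thesis .
qed

lemma Mmat_l1_bound:
  assumes "transpose A = A" and "\<forall>i j. A $ i $ j \<ge> 0" and "lam > 0" and "w0 > 0"
  shows "l1_margin A lam w0 * (\<Sum>k\<in>UNIV. \<bar>x $ k\<bar>) \<le> (\<Sum>i\<in>UNIV. \<bar>(Mmat A L lam w0 *v x) $ i\<bar>)"
  using Mmat_l1_bound_on[OF assms, where S=UNIV] by simp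

lemma Mmat_invertible:
  assumes "transpose A = A" and "\<forall>i j. A $ i $ j \<ge> 0" and "\<forall>i. degD A i > 0"
    and "lam > 0" and "w0 > 0"
  shows "invertible (Mmat A L lam w0)"
  unfolding invertible_left_inverse matrix_left_invertible_ker
proof (intro allI impI)
  fix x
  assume "Mmat A L lam w0 *v x = 0"
  then have "l1_margin A lam w0 * (\<Sum>k\<in>UNIV. \<bar>x $ k\<bar>) \<le> 0"
    using Mmat_l1_bound[OF assms(1,2,4,5), where x=x and L=L] by simp
  then have "(\<Sum>k\<in>UNIV. \<bar>x $ k\<bar>) = 0"
    using l1_margin_pos[OF assms(3-5)] by (simp add: mult_le_0_iff antisym sum_nonneg)
  then show "x = 0" by (simp add: vec_eq_iff sum_nonneg_eq_0_iff)
qed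

lemma Mmat_inv_column_l1:
  assumes "transpose A = A" and "\<forall>i j. A $ i $ j \<ge> 0" and "\<forall>i. degD A i > 0"
    and "lam > 0" and "w0 > 0"
  shows "(\<Sum>k\<in>UNIV. \<bar>matrix_inv (Mmat A L lam w0) $ k $ j\<bar>) \<le> 1 / l1_margin A lam w0"
proof -
  let ?x = "column j (matrix_inv (Mmat A L lam w0))"
  have "l1_margin A lam w0 * (\<Sum>k\<in>UNIV. \<bar>?x $ k\<bar>) \<le> (\<Sum>i\<in>UNIV. \<bar>axis j 1 $ i\<bar>)"
    using Mmat_l1_bound[OF assms(1,2,4,5), where x="?x" and L=L]
    by (simp add: matrix_inv_column[OF Mmat_invertible[OF assms]])
  then show ?thesis
    using l1_margin_pos[OF assms(3-5)]
    by (simp add: column_def axis_def field_simps)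
qed

lemma block_norm1_nonneg: "block_norm1 R C X \<ge> 0"
  unfolding block_norm1_def by (rule Max_ge) auto

lemma column_abs_sum_le_block_norm1:
  assumes "j \<in> C"
  shows "(\<Sum>i\<in>R. \<bar>X $ i $ j\<bar>) \<le> block_norm1 R C X"
  unfolding block_norm1_def using assms by (intro Max_ge) auto

lemma block_norm1_less:
  assumes "\<And>j. j \<in> C \<Longrightarrow> (\<Sum>i\<in>R. \<bar>X $ i $ j\<bar>) \<le> B" and "B < b" and "0 < b"
  shows "block_norm1 R C X < b"
  unfolding block_norm1_def using assms by (subst Max_less_iff) (auto intro: le_less_trans)

lemma cross_part_column_sum_le:
  assumes "\<forall>i j. A $ i $ j \<ge> 0" and "k \<notin> C1"
  shows "(\<Sum>i\<in>C1. A $ i $ k) \<le> mat_norm1 (cross_part A C1)"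
proof -
  have "(\<Sum>i\<in>C1. A $ i $ k) = (\<Sum>i\<in>UNIV. \<bar>cross_part A C1 $ i $ k\<bar>)"
    using assms by (simp add: cross_part_def sum.If_cases Collect_neg_eq)
  also have "\<dots> \<le> mat_norm1 (cross_part A C1)"
    unfolding mat_norm1_def by (rule column_abs_sum_le_block_norm1) simp
  finally show ?thesis .
qed

lemma Mmat_inv_cross_column_l1:
  assumes "transpose A = A" and "\<forall>i j. A $ i $ j \<ge> 0" and "\<forall>i. degD A i > 0"
    and "lam > 0" and "w0 > 0" and "j \<notin> C1"
  shows "(\<Sum>i\<in>C1. \<bar>matrix_inv (Mmat A L lam w0) $ i $ j\<bar>)
           \<le> mat_norm1 (cross_part A C1) / (l1_margin A lam w0)\<^sup>2"
proof -
  let ?x = "column j (matrix_inv (Mmat A L lam w0))"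
  let ?\<kappa> = "l1_margin A lam w0" and ?N = "mat_norm1 (cross_part A C1)"
  have "?\<kappa> * (\<Sum>k\<in>C1. \<bar>?x $ k\<bar>)
          \<le> (\<Sum>i\<in>C1. \<bar>axis j 1 $ i\<bar>) + (\<Sum>k\<in>-C1. \<bar>?x $ k\<bar> * (\<Sum>i\<in>C1. A $ i $ k))"
    using Mmat_l1_bound_on[OF assms(1,2,4,5), where S=C1 and x="?x" and L=L]
    by (simp add: matrix_inv_column[OF Mmat_invertible[OF assms(1-5)]])
  also have "(\<Sum>i\<in>C1. \<bar>axis j (1::real) $ i\<bar>) = 0"
    using assms(6) by (intro sum.neutral) (auto simp: axis_def)
  also have "(\<Sum>k\<in>-C1. \<bar>?x $ k\<bar> * (\<Sum>i\<in>C1. A $ i $ k)) \<le> (\<Sum>k\<in>-C1. \<bar>?x $ k\<bar> * ?N)"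
    by (intro sum_mono mult_left_mono cross_part_column_sum_le) (use assms(2) in auto)
  also have "\<dots> \<le> (\<Sum>k\<in>UNIV. \<bar>?x $ k\<bar>) * ?N"
    unfolding sum_distrib_right[symmetric] using block_norm1_nonneg[of UNIV UNIV]
    by (intro mult_right_mono sum_mono2) (auto simp: mat_norm1_def)
  also have "\<dots> \<le> (1 / ?\<kappa>) * ?N"
    using Mmat_inv_column_l1[OF assms(1-5), where j=j and L=L]
      block_norm1_nonneg[of UNIV UNIV "cross_part A C1"]
    by (intro mult_right_mono) (simp_all add: column_def mat_norm1_def)
  finally show ?thesis
    using l1_margin_pos[OF assms(3-5)]
    by (simp add: column_def field_simps power2_eq_square)
qed

theorem lemma4p1:
  fixes A :: "real^'n^'n" and L U C1 C2 :: "'n set" and lam w0 \<epsilon> :: real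
  assumes symA: "transpose A = A"
    and nonneg: "\<forall>i j. A $ i $ j \<ge> 0"
    and degpos: "\<forall>i. degD A i > 0"
    and lam_pos: "lam > 0" and w0_pos: "w0 > 0"
    and LU: "L \<inter> U = {}" "L \<union> U = UNIV"
    and C12: "C1 \<inter> C2 = {}" "C1 \<union> C2 = UNIV"
    and eps_pos: "\<epsilon> > 0"
    and small: "mat_norm1 (cross_part A C1) < \<epsilon>"
  shows "block_norm1 C1 C2 (matrix_inv (Mmat A L lam w0))
           < (1 / (min (1 / lam) w0 * Min (range (degD A))))^2 * \<epsilon>"
proof -
  let ?\<kappa> = "l1_margin A lam w0" and ?N = "mat_norm1 (cross_part A C1)"
  have \<kappa>_pos: "?\<kappa> > 0" using l1_margin_pos degpos lam_pos w0_pos .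
  have "block_norm1 C1 C2 (matrix_inv (Mmat A L lam w0)) < (1 / ?\<kappa>)\<^sup>2 * \<epsilon>"
  proof (rule block_norm1_less)
    fix j assume "j \<in> C2"
    with C12 have "j \<notin> C1" by auto
    then show "(\<Sum>i\<in>C1. \<bar>matrix_inv (Mmat A L lam w0) $ i $ j\<bar>) \<le> ?N / ?\<kappa>\<^sup>2"
      by (rule Mmat_inv_cross_column_l1[OF symA nonneg degpos lam_pos w0_pos])
  next
    show "?N / ?\<kappa>\<^sup>2 < (1 / ?\<kappa>)\<^sup>2 * \<epsilon>"
      using small \<kappa>_pos by (simp add: field_simps power2_eq_square)
    show "0 < (1 / ?\<kappa>)\<^sup>2 * \<epsilon>" using \<kappa>_pos eps_pos by simp
  qed
  then show ?thesis unfolding l1_margin_def .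
qed

end
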